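(* Let $D$ be a locatable digraph of order $n$, and let $D'$ be the spanning subdigraph of $D$ whose arcs are exactly the forcing arcs of $D$. Then $\gamma_{OL}(D)=n$ if and only if $D'$ is a disjoint union of directed cycles covering all vertices of $D$ (i.e. every vertex of $D$ lies on exactly one of these cycles, and the arcs of $D'$ are exactly the arcs of these cycles).
   Context: Digraphs are finite and may contain loops; between two distinct vertices there may be arcs in one or both directions, no repeated arcs. A directed cycle may have length 1 (a loop) or 2 (arcs $uv$ and $vu$). $N^-(v)=\{u: uv\text{ is an arc}\}$ (contains $v$ iff $v$ has a loop). An OLD set of $D$ is a set $S\subseteq V(D)$ such that every vertex has an in-neighbour in $S$ and for every two distinct vertices $u,w$ some vertex of $S$ lies in exactly one of $N^-(u),N^-(w)$. $D$ is locatable if it has an OLD set, and then $\gamma_{OL}(D)$ is the minimum size of an OLD set. An arc $xy$ (possibly a loop) of $D$ is a forcing arc if either $N^-(y)=\{x\}$, or there is a vertex $z$ with $N^-(z)=N^-(y)\setminus\{x\}$. *)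

theory Defs
  imports Main
begin

definition digraph :: "'a set \<Rightarrow> ('a \<times> 'a) set \<Rightarrow> bool" where
  "digraph V A \<longleftrightarrow> finite V \<and> A \<subseteq> V \<times> V"

definition in_nbhd :: "'a set \<Rightarrow> ('a \<times> 'a) set \<Rightarrow> 'a \<Rightarrow> 'a set" where
  "in_nbhd V A v = {u \<in> V. (u, v) \<in> A}"

definition is_OLD :: "'a set \<Rightarrow> ('a \<times> 'a) set \<Rightarrow> 'a set \<Rightarrow> bool" where
  "is_OLD V A S \<longleftrightarrow> S \<subseteq> V
     \<and> (\<forall>v\<in>V. in_nbhd V A v \<inter> S \<noteq> {})
     \<and> (\<forall>u\<in>V. \<forall>w\<in>V. u \<noteq> w \<longrightarrow>
          (\<exists>s\<in>S. (s \<in> in_nbhd V A u) \<noteq> (s \<in> in_nbhd V A w)))"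

definition locatable :: "'a set \<Rightarrow> ('a \<times> 'a) set \<Rightarrow> bool" where
  "locatable V A \<longleftrightarrow> (\<exists>S. is_OLD V A S)"

definition gamma_OL :: "'a set \<Rightarrow> ('a \<times> 'a) set \<Rightarrow> nat" where
  "gamma_OL V A = (LEAST k. \<exists>S. is_OLD V A S \<and> card S = k)"

definition forcing_arc :: "'a set \<Rightarrow> ('a \<times> 'a) set \<Rightarrow> 'a \<Rightarrow> 'a \<Rightarrow> bool" where
  "forcing_arc V A x y \<longleftrightarrow> (x, y) \<in> A \<and>
     (in_nbhd V A y = {x} \<or> (\<exists>z\<in>V. in_nbhd V A z = in_nbhd V A y - {x}))"

definition forcing_arcs :: "'a set \<Rightarrow> ('a \<times> 'a) set \<Rightarrow> ('a \<times> 'a) set" where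
  "forcing_arcs V A = {(x, y). forcing_arc V A x y}"

text \<open>A directed cycle is given by a nonempty list of distinct vertices
  [c0, ..., c(k-1)]; its arcs are c_i c_(i+1 mod k). Length 1 gives a loop,
  length 2 gives a pair of opposite arcs.\<close>

definition dcycle :: "'a list \<Rightarrow> bool" where
  "dcycle cs \<longleftrightarrow> cs \<noteq> [] \<and> distinct cs"

definition cycle_arcs :: "'a list \<Rightarrow> ('a \<times> 'a) set" where
  "cycle_arcs cs = {(cs ! i, cs ! ((i + 1) mod length cs)) | i. i < length cs}"

definition disjoint_cycle_cover :: "'a set \<Rightarrow> ('a \<times> 'a) set \<Rightarrow> bool" where
  "disjoint_cycle_cover V F \<longleftrightarrow>
     (\<exists>C. (\<forall>c\<in>C. dcycle c)
        \<and> (\<forall>v\<in>V. \<exists>!c. c \<in> C \<and> v \<in> set c)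
        \<and> (\<Union>c\<in>C. set c) = V
        \<and> F = (\<Union>c\<in>C. cycle_arcs c))"

end

theory Submission
  imports Defs "HOL-Combinatorics.Orbits"
begin

text \<open>Since OLD sets are closed upwards inside V, \<open>\<gamma>\<^sub>O\<^sub>L(D) = n\<close> iff no \<open>V - {x}\<close> is an OLD
  set, and \<open>V - {x}\<close> fails to be one exactly when x is the tail of a forcing arc. The
  in-neighbourhoods together with \<open>{}\<close> form a family of \<open>n + 1\<close> subsets of V, and a forcing
  arc xy says that both \<open>N\<^sup>-(y)\<close> and \<open>N\<^sup>-(y) - {x}\<close> lie in it. If every vertex is the tail of
  a forcing arc, a counting argument in the spirit of Bondy's theorem (deleting a point from all
  members merges two of them, so induction on the ground set applies) shows that no member can
  lose two different points and stay in the family; hence every vertex is the head of at most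
  one forcing arc. The forcing arcs then form the graph of a permutation of V, whose orbits are
  the required cycles. Conversely, on a cycle cover every vertex is the tail of a forcing arc.\<close>

lemma is_OLD_mono: "is_OLD V A S \<Longrightarrow> S \<subseteq> T \<Longrightarrow> T \<subseteq> V \<Longrightarrow> is_OLD V A T"
  unfolding is_OLD_def by blast

lemma locatable_iff_is_OLD_V: "locatable V A \<longleftrightarrow> is_OLD V A V"
  unfolding locatable_def by (metis is_OLD_def is_OLD_mono order_refl)

lemma in_nbhd_subset: "in_nbhd V A v \<subseteq> V"
  unfolding in_nbhd_def by blast

lemma locatable_in_nbhd_nonempty: "locatable V A \<Longrightarrow> v \<in> V \<Longrightarrow> in_nbhd V A v \<noteq> {}"
  unfolding locatable_def is_OLD_def by blast

lemma locatable_inj_on_in_nbhd: "locatable V A \<Longrightarrow> inj_on (in_nbhd V A) V"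
  unfolding locatable_def is_OLD_def inj_on_def by metis

lemma gamma_OL_eq_card_iff:
  assumes "finite V" and "locatable V A"
  shows "gamma_OL V A = card V \<longleftrightarrow> (\<forall>x\<in>V. \<not> is_OLD V A (V - {x}))"
proof
  assume gamma: "gamma_OL V A = card V"
  show "\<forall>x\<in>V. \<not> is_OLD V A (V - {x})"
  proof (intro ballI notI)
    fix x assume "x \<in> V" and "is_OLD V A (V - {x})"
    then have "gamma_OL V A \<le> card (V - {x})"
      unfolding gamma_OL_def by (intro Least_le) blast
    also have "\<dots> < card V" using \<open>finite V\<close> \<open>x \<in> V\<close> by (rule card_Diff1_less)
    finally show False using gamma by simp
  qed
next
  assume no_deletion: "\<forall>x\<in>V. \<not> is_OLD V A (V - {x})"
  have V_OLD: "\<exists>S. is_OLD V A S \<and> card S = card V"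
    using assms(2) by (auto simp: locatable_iff_is_OLD_V)
  then have le: "gamma_OL V A \<le> card V"
    unfolding gamma_OL_def by (rule Least_le)
  obtain S where S: "is_OLD V A S" "card S = gamma_OL V A"
    using LeastI_ex[of "\<lambda>k. \<exists>S. is_OLD V A S \<and> card S = k"] V_OLD
    unfolding gamma_OL_def by blast
  have "S \<subseteq> V" using S(1) unfolding is_OLD_def by blast
  show "gamma_OL V A = card V"
  proof (rule ccontr)
    assume "gamma_OL V A \<noteq> card V"
    then have "S \<noteq> V" using S(2) le by auto
    then obtain x where "x \<in> V" "x \<notin> S" using \<open>S \<subseteq> V\<close> by blast
    then have "is_OLD V A (V - {x})" using S(1) \<open>S \<subseteq> V\<close> by (auto intro: is_OLD_mono)
    then show False using no_deletion \<open>x \<in> V\<close> by blast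
  qed
qed

lemma forcing_arc_iff:
  assumes "digraph V A"
  shows "forcing_arc V A x y \<longleftrightarrow>
    y \<in> V \<and> x \<in> in_nbhd V A y \<and> in_nbhd V A y - {x} \<in> insert {} (in_nbhd V A ` V)"
proof -
  have "(x, y) \<in> A \<longleftrightarrow> y \<in> V \<and> x \<in> in_nbhd V A y"
    using assms unfolding digraph_def in_nbhd_def by auto
  moreover have "x \<in> in_nbhd V A y \<Longrightarrow> in_nbhd V A y = {x} \<longleftrightarrow> in_nbhd V A y - {x} = {}"
    by blast
  ultimately show ?thesis unfolding forcing_arc_def by auto
qed

lemma not_is_OLD_Diff_iff_forcing_arc:
  assumes dg: "digraph V A" and loc: "locatable V A" and "x \<in> V"
  shows "\<not> is_OLD V A (V - {x}) \<longleftrightarrow> (\<exists>y. forcing_arc V A x y)"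
proof
  assume not_OLD: "\<not> is_OLD V A (V - {x})"
  show "\<exists>y. forcing_arc V A x y"
  proof (cases "\<exists>v\<in>V. in_nbhd V A v \<inter> (V - {x}) = {}")
    case True
    then obtain v where "v \<in> V" "in_nbhd V A v \<inter> (V - {x}) = {}" by blast
    then have "in_nbhd V A v = {x}"
      using locatable_in_nbhd_nonempty[OF loc] in_nbhd_subset[of V A v] by blast
    then show ?thesis using \<open>v \<in> V\<close> by (auto simp: forcing_arc_iff[OF dg])
  next
    case False
    then obtain u w where "u \<in> V" "w \<in> V" "u \<noteq> w"
      and agree: "\<forall>s\<in>V - {x}. s \<in> in_nbhd V A u \<longleftrightarrow> s \<in> in_nbhd V A w"
      using not_OLD unfolding is_OLD_def by blast
    then have "in_nbhd V A u \<noteq> in_nbhd V A w"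
      using locatable_inj_on_in_nbhd[OF loc] by (meson inj_onD)
    moreover have "in_nbhd V A u - {x} = in_nbhd V A w - {x}"
      using agree in_nbhd_subset[of V A u] in_nbhd_subset[of V A w] by blast
    ultimately have "in_nbhd V A u - {x} = in_nbhd V A w \<and> x \<in> in_nbhd V A u
        \<or> in_nbhd V A w - {x} = in_nbhd V A u \<and> x \<in> in_nbhd V A w"
      by blast
    then show ?thesis using \<open>u \<in> V\<close> \<open>w \<in> V\<close> by (auto simp: forcing_arc_iff[OF dg])
  qed
next
  assume "\<exists>y. forcing_arc V A x y"
  then obtain y where "y \<in> V" "x \<in> in_nbhd V A y"
    and "in_nbhd V A y - {x} \<in> insert {} (in_nbhd V A ` V)"
    by (auto simp: forcing_arc_iff[OF dg])
  then consider "in_nbhd V A y \<inter> (V - {x}) = {}"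
    | z where "z \<in> V" "z \<noteq> y" "\<forall>s\<in>V - {x}. s \<in> in_nbhd V A z \<longleftrightarrow> s \<in> in_nbhd V A y"
    by auto
  then show "\<not> is_OLD V A (V - {x})"
    unfolding is_OLD_def using \<open>y \<in> V\<close> by cases metis+
qed

lemma gamma_OL_eq_card_iff_forcing_tails:
  assumes "digraph V A" and "locatable V A"
  shows "gamma_OL V A = card V \<longleftrightarrow> (\<forall>x\<in>V. \<exists>y. forcing_arc V A x y)"
  using assms gamma_OL_eq_card_iff[of V A] not_is_OLD_Diff_iff_forcing_arc[of V A]
  by (simp add: digraph_def)

lemma card_image_Diff_singleton_less:
  assumes "finite F" "P \<in> F" "insert x P \<in> F" "x \<notin> P"
  shows "card ((\<lambda>S. S - {x}) ` F) < card F"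
proof -
  have "P - {x} = insert x P - {x}" "P \<noteq> insert x P" using assms(4) by auto
  then have "\<not> inj_on (\<lambda>S. S - {x}) F" using assms(2,3) by (meson inj_onD)
  then show ?thesis
    using assms(1) card_image_le inj_on_iff_eq_card le_neq_implies_less by blast
qed

lemma four_le_card_of_two_removals:
  assumes "finite F" "{} \<in> F" "Q \<in> F" "x1 \<in> Q" "x2 \<in> Q" "Q - {x1} \<in> F" "Q - {x2} \<in> F"
    and "x1 \<noteq> x2"
  shows "4 \<le> card F"
proof -
  have "card {{}, Q, Q - {x1}, Q - {x2}} = 4"
    using assms(4,5,8) by (auto simp: card_insert_if)
  moreover have "{{}, Q, Q - {x1}, Q - {x2}} \<subseteq> F" using assms(2,3,6,7) by auto
  then have "card {{}, Q, Q - {x1}, Q - {x2}} \<le> card F" by (rule card_mono[OF assms(1)])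
  ultimately show ?thesis by simp
qed

lemma removable_element_unique:
  assumes "finite X" "F \<subseteq> Pow X" "{} \<in> F" "card F \<le> card X + 1"
    and "\<forall>x\<in>X. \<exists>P\<in>F. x \<notin> P \<and> insert x P \<in> F"
    and "Q \<in> F" "x1 \<in> Q" "x2 \<in> Q" "Q - {x1} \<in> F" "Q - {x2} \<in> F"
  shows "x1 = x2"
  using assms
proof (induction "card X" arbitrary: X F Q rule: less_induct)
  case less
  have "finite F" using less.prems(1,2) by (meson finite_Pow_iff rev_finite_subset)
  show "x1 = x2"
  proof (rule ccontr)
    assume "x1 \<noteq> x2"
    show False
    proof (cases "X \<subseteq> {x1, x2}")
      case True
      then have "X = {x1, x2}" using less.prems(2,6-8) by auto
      moreover have "4 \<le> card F"
        by (rule four_le_card_of_two_removals[OF \<open>finite F\<close> less.prems(3,6-10) \<open>x1 \<noteq> x2\<close>])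
      ultimately show False using less.prems(4) \<open>x1 \<noteq> x2\<close> by simp
    next
      case False
      then obtain x where x: "x \<in> X" "x \<noteq> x1" "x \<noteq> x2" by auto
      define G where "G = (\<lambda>S. S - {x}) ` F"
      obtain P where "P \<in> F" "insert x P \<in> F" "x \<notin> P" using less.prems(5) x(1) by blast
      with \<open>finite F\<close> have "card G < card F"
        unfolding G_def by (rule card_image_Diff_singleton_less)
      then have card_G: "card G \<le> card (X - {x}) + 1"
        using less.prems(1,4) x(1) by (simp add: card_Diff_singleton)
      have steps_G: "\<forall>y\<in>X - {x}. \<exists>P\<in>G. y \<notin> P \<and> insert y P \<in> G"
      proof
        fix y assume y: "y \<in> X - {x}"
        then obtain P where "P \<in> F" "y \<notin> P" "insert y P \<in> F" using less.prems(5) by blast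
        moreover have "insert y (P - {x}) = insert y P - {x}" using y by auto
        ultimately show "\<exists>P\<in>G. y \<notin> P \<and> insert y P \<in> G"
          unfolding G_def by (metis DiffD1 image_eqI)
      qed
      have "Q - {x} - {x1} = (Q - {x1}) - {x}" "Q - {x} - {x2} = (Q - {x2}) - {x}" by auto
      then have removals_G: "Q - {x} - {x1} \<in> G" "Q - {x} - {x2} \<in> G"
        unfolding G_def using less.prems(9,10) by auto
      have "card (X - {x}) < card X" using less.prems(1) x(1) by (rule card_Diff1_less)
      moreover have "G \<subseteq> Pow (X - {x})" "{} \<in> G" "Q - {x} \<in> G"
        unfolding G_def using less.prems(2,3,6) by force+
      ultimately have "x1 = x2"
        using less.hyps[OF _ _ _ _ card_G steps_G _ _ _ removals_G] less.prems(1,7,8) x(2,3)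
        by blast
      then show False using \<open>x1 \<noteq> x2\<close> by simp
    qed
  qed
qed

lemma forcing_arc_tail_unique:
  assumes dg: "digraph V A" and loc: "locatable V A"
    and tails: "\<forall>x\<in>V. \<exists>y. forcing_arc V A x y"
    and "forcing_arc V A x1 y" "forcing_arc V A x2 y"
  shows "x1 = x2"
proof -
  define F where "F = insert {} (in_nbhd V A ` V)"
  have "finite V" using dg by (simp add: digraph_def)
  have "{} \<notin> in_nbhd V A ` V" using locatable_in_nbhd_nonempty[OF loc] by auto
  then have card_F: "card F \<le> card V + 1"
    unfolding F_def using \<open>finite V\<close> by (simp add: card_image locatable_inj_on_in_nbhd[OF loc])
  have F_Pow: "F \<subseteq> Pow V" unfolding F_def using in_nbhd_subset[of V A] by blast
  have steps: "\<forall>x\<in>V. \<exists>P\<in>F. x \<notin> P \<and> insert x P \<in> F"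
  proof
    fix x assume "x \<in> V"
    then obtain y where "forcing_arc V A x y" using tails by blast
    then have "y \<in> V" "x \<in> in_nbhd V A y" "in_nbhd V A y - {x} \<in> F"
      by (simp_all add: F_def forcing_arc_iff[OF dg])
    moreover have "insert x (in_nbhd V A y - {x}) = in_nbhd V A y"
      using \<open>x \<in> in_nbhd V A y\<close> by blast
    ultimately show "\<exists>P\<in>F. x \<notin> P \<and> insert x P \<in> F"
      unfolding F_def by (intro bexI[of _ "in_nbhd V A y - {x}"]) auto
  qed
  have "y \<in> V" and x12: "x1 \<in> in_nbhd V A y" "x2 \<in> in_nbhd V A y"
    and removals: "in_nbhd V A y - {x1} \<in> F" "in_nbhd V A y - {x2} \<in> F"
    using assms(4,5) by (simp_all add: F_def forcing_arc_iff[OF dg])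
  moreover have "{} \<in> F" "in_nbhd V A y \<in> F" unfolding F_def using \<open>y \<in> V\<close> by blast+
  ultimately show ?thesis
    by (intro removable_element_unique[OF \<open>finite V\<close> F_Pow _ card_F steps _ x12 removals])
qed

lemma graph_of_permutation:
  assumes "finite V" and "R \<subseteq> V \<times> V"
    and total: "\<forall>x\<in>V. \<exists>y. (x, y) \<in> R"
    and tail_unique: "\<And>x1 x2 y. (x1, y) \<in> R \<Longrightarrow> (x2, y) \<in> R \<Longrightarrow> x1 = x2"
  shows "\<exists>h. h permutes V \<and> R = {(x, h x) | x. x \<in> V}"
proof -
  define f where "f x = (SOME y. (x, y) \<in> R)" for x
  have f_in_R: "(x, f x) \<in> R" if "x \<in> V" for x
    unfolding f_def using total that by (meson someI_ex)
  then have "inj_on f V" by (metis inj_onI tail_unique)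
  moreover have "f ` V \<subseteq> V" using f_in_R assms(2) by blast
  ultimately have "f ` V = V"
    using \<open>finite V\<close> by (simp add: card_image card_subset_eq)
  define h where "h x = (if x \<in> V then f x else x)" for x
  have "h permutes V"
  proof (rule bij_imp_permutes)
    show "bij_betw h V V"
      using \<open>inj_on f V\<close> \<open>f ` V = V\<close> by (simp add: bij_betw_def h_def inj_on_def image_def)
    show "\<And>x. x \<notin> V \<Longrightarrow> h x = x" by (simp add: h_def)
  qed
  moreover have "R = {(x, h x) | x. x \<in> V}"
  proof (intro set_eqI iffI)
    fix p assume "p \<in> R"
    then obtain x y where p: "p = (x, y)" "(x, y) \<in> R" by (cases p) auto
    then have "y \<in> f ` V" using assms(2) \<open>f ` V = V\<close> by blast
    then obtain x' where "x' \<in> V" "y = f x'" by blast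
    then have "x = x'" using p(2) f_in_R tail_unique by blast
    then show "p \<in> {(x, h x) | x. x \<in> V}" using p \<open>x' \<in> V\<close> \<open>y = f x'\<close> by (auto simp: h_def)
  qed (auto simp: h_def f_in_R)
  ultimately show ?thesis by blast
qed

definition orbit_list :: "('a \<Rightarrow> 'a) \<Rightarrow> 'a \<Rightarrow> 'a list" where
  "orbit_list h u = map (\<lambda>n. (h ^^ n) u) [0..<funpow_dist1 h u u]"

lemma orbit_list_nonempty: "orbit_list h u \<noteq> []"
  by (simp add: orbit_list_def)

context
  fixes h :: "'a \<Rightarrow> 'a"
  assumes perm: "permutation h"
begin

lemma orbit_SOME_in_orbit: "orbit h (SOME u. u \<in> orbit h v) = orbit h v"
proof -
  have "(SOME u. u \<in> orbit h v) \<in> orbit h v"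
    using permutation_self_in_orbit[OF perm] by (rule someI)
  then show ?thesis by (rule orbit_cyclic_eq3[OF cyclic_on_orbit'[OF perm]])
qed

lemma set_orbit_list: "set (orbit_list h u) = orbit h u"
  unfolding orbit_list_def set_map set_upt
  by (rule orbit_conv_funpow_dist1[OF permutation_self_in_orbit[OF perm], symmetric])

lemma distinct_orbit_list: "distinct (orbit_list h u)"
  unfolding orbit_list_def distinct_map
  using inj_on_funpow_dist1[OF permutation_self_in_orbit[OF perm]]
  by (simp only: distinct_upt set_upt simp_thms)

lemma cycle_arcs_orbit_list: "cycle_arcs (orbit_list h u) = {(w, h w) | w. w \<in> orbit h u}"
proof -
  define L where "L = funpow_dist1 h u u"
  have "0 < L" by (simp add: L_def)
  have list: "orbit_list h u = map (\<lambda>n. (h ^^ n) u) [0..<L]"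
    unfolding orbit_list_def L_def ..
  then have length_list: "length (orbit_list h u) = L" by simp
  have period: "(h ^^ L) u = u"
    unfolding L_def by (rule funpow_dist1_prop[OF permutation_self_in_orbit[OF perm]])
  have "(orbit_list h u ! i, orbit_list h u ! ((i + 1) mod L)) = ((h ^^ i) u, h ((h ^^ i) u))"
    if "i < L" for i
  proof -
    have "orbit_list h u ! ((i + 1) mod L) = (h ^^ ((i + 1) mod L)) u"
      using \<open>0 < L\<close> by (simp add: list)
    also have "\<dots> = (h ^^ (i + 1)) u" by (rule funpow_mod_eq[OF period])
    finally show ?thesis using that by (simp add: list)
  qed
  then have "cycle_arcs (orbit_list h u) = {((h ^^ i) u, h ((h ^^ i) u)) | i. i < L}"
    unfolding cycle_arcs_def by (intro Collect_cong) (metis length_list)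
  also have "\<dots> = {(w, h w) | w. w \<in> orbit h u}"
    using orbit_altdef_bounded[OF period] \<open>0 < L\<close> by auto
  finally show ?thesis .
qed

end

lemma permutes_disjoint_cycle_cover:
  assumes "finite V" and "h permutes V"
  shows "disjoint_cycle_cover V {(x, h x) | x. x \<in> V}"
proof -
  have perm: "permutation h" using assms by (rule permutes_imp_permutation)
  have orbit_eq: "orbit h u = orbit h v" if "u \<in> orbit h v" for u v
    using orbit_cyclic_eq3[OF cyclic_on_orbit'[OF perm] that] .
  have orbit_subset: "orbit h v \<subseteq> V" if "v \<in> V" for v
    using permutes_orbit_subset[OF assms(2) that] .
  define cyc where "cyc X = orbit_list h (SOME u. u \<in> X)" for X
  have set_cyc: "set (cyc (orbit h v)) = orbit h v" for v
    unfolding cyc_def set_orbit_list[OF perm] orbit_SOME_in_orbit[OF perm] ..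
  have arcs_cyc: "cycle_arcs (cyc (orbit h v)) = {(w, h w) | w. w \<in> orbit h v}" for v
    unfolding cyc_def cycle_arcs_orbit_list[OF perm] orbit_SOME_in_orbit[OF perm] ..
  define C where "C = cyc ` orbit h ` V"
  show ?thesis unfolding disjoint_cycle_cover_def
  proof (intro exI[of _ C] conjI ballI)
    fix c assume "c \<in> C"
    then show "dcycle c"
      unfolding C_def cyc_def dcycle_def
      by (auto simp: orbit_list_nonempty distinct_orbit_list[OF perm])
  next
    fix v assume "v \<in> V"
    show "\<exists>!c. c \<in> C \<and> v \<in> set c"
    proof
      show "cyc (orbit h v) \<in> C \<and> v \<in> set (cyc (orbit h v))"
        unfolding C_def set_cyc using \<open>v \<in> V\<close> permutation_self_in_orbit[OF perm] by blast
    next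
      fix c assume "c \<in> C \<and> v \<in> set c"
      then show "c = cyc (orbit h v)" unfolding C_def using set_cyc orbit_eq by auto
    qed
  next
    show "(\<Union>c\<in>C. set c) = V"
      unfolding C_def using set_cyc orbit_subset permutation_self_in_orbit[OF perm] by auto
  next
    have "(\<Union>c\<in>C. cycle_arcs c) = {(w, h w) | w. w \<in> (\<Union>v\<in>V. orbit h v)}"
      unfolding C_def by (auto simp: arcs_cyc)
    also have "(\<Union>v\<in>V. orbit h v) = V"
      using orbit_subset permutation_self_in_orbit[OF perm] by auto
    finally show "{(x, h x) | x. x \<in> V} = (\<Union>c\<in>C. cycle_arcs c)" by simp
  qed
qed

lemma disjoint_cycle_cover_out_arc:
  assumes "disjoint_cycle_cover V F" and "x \<in> V"
  shows "\<exists>y. (x, y) \<in> F"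
proof -
  obtain C where C: "\<forall>v\<in>V. \<exists>!c. c \<in> C \<and> v \<in> set c" "F = (\<Union>c\<in>C. cycle_arcs c)"
    using assms(1) unfolding disjoint_cycle_cover_def by blast
  then obtain c i where "c \<in> C" "i < length c" "c ! i = x"
    using \<open>x \<in> V\<close> by (metis in_set_conv_nth)
  then have "(x, c ! ((i + 1) mod length c)) \<in> F"
    unfolding C(2) cycle_arcs_def by blast
  then show ?thesis ..
qed

theorem theorem12:
  fixes V :: "'a set" and A :: "('a \<times> 'a) set"
  assumes "digraph V A" and "locatable V A"
  shows "gamma_OL V A = card V \<longleftrightarrow> disjoint_cycle_cover V (forcing_arcs V A)"
proof
  assume "gamma_OL V A = card V"
  then have tails: "\<forall>x\<in>V. \<exists>y. forcing_arc V A x y"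
    using gamma_OL_eq_card_iff_forcing_tails[OF assms] by blast
  have "finite V" and arcs_subset: "forcing_arcs V A \<subseteq> V \<times> V"
    using assms(1) by (auto simp: digraph_def forcing_arcs_def forcing_arc_def)
  have total: "\<forall>x\<in>V. \<exists>y. (x, y) \<in> forcing_arcs V A"
    using tails by (simp add: forcing_arcs_def)
  have tail_unique: "x1 = x2"
    if "(x1, y) \<in> forcing_arcs V A" "(x2, y) \<in> forcing_arcs V A" for x1 x2 y
    using forcing_arc_tail_unique[OF assms tails] that by (simp add: forcing_arcs_def)
  obtain h where "h permutes V" "forcing_arcs V A = {(x, h x) | x. x \<in> V}"
    using graph_of_permutation[OF \<open>finite V\<close> arcs_subset total] tail_unique by blast
  then show "disjoint_cycle_cover V (forcing_arcs V A)"
    using \<open>finite V\<close> by (simp add: permutes_disjoint_cycle_cover)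
next
  assume "disjoint_cycle_cover V (forcing_arcs V A)"
  then have "\<forall>x\<in>V. \<exists>y. forcing_arc V A x y"
    using disjoint_cycle_cover_out_arc by (fastforce simp: forcing_arcs_def)
  then show "gamma_OL V A = card V"
    using gamma_OL_eq_card_iff_forcing_tails[OF assms] by blast
qed

end
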